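(* Let $G$ be a group with a split $BN$-pair $(H,U,N)$ whose Weyl group is $W=N/H=\{1,s_1\}$. Let $n_1\in N$ with $s_1=n_1H$, let $U^-:=U^{n_1}$, $(U^-)^*:=U^-\setminus\{1\}$, and \[ \widetilde H:=\{h\in H:\ \exists\, u^-\in (U^-)^*\text{ with } Uu^-U=Un_1hU\}. \] Then the following are equivalent: (a) $(U^-)^*\cap Un_1hU\neq\emptyset$ for all $h\in H$ (equivalently, $\widetilde H=H$); (b) $U(U^-)^*U=Un_1HU$; (c) $G=(UU^-)^2=UU^-UU^-$.
   Context: A split $BN$-pair $(H,U,N)$ for $G$ means $B=H\ltimes U$ and $N$ satisfy the axioms of split $BN$-pairs (as in Carter, Finite Groups of Lie Type, \S 2.5) with $H=B\cap N$. Here $s_1$ is the longest element of $W$, so $U^{-}=U^{n_1}$ is the opposite unipotent subgroup. Products of subsets are setwise. *)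

theory Defs
  imports "HOL-Algebra.Algebra"
begin

text \<open>BN-pair (Tits system) in the sense of Carter, Finite Groups of Lie Type, 2.5:
  B, N subgroups generating G, H = B \<inter> N normal in N, and W = N/H generated by
  involutions w_i = r_i H (r_i \<in> R \<subseteq> N) such that r_i B r_i^{-1} \<noteq> B and
  r_i B n \<subseteq> BnB \<union> B r_i n B for all n \<in> N.\<close>

definition BN_pair :: "('a, 'b) monoid_scheme \<Rightarrow> 'a set \<Rightarrow> 'a set \<Rightarrow> bool" where
  "BN_pair G B N \<longleftrightarrow>
     group G \<and> subgroup B G \<and> subgroup N G \<and>
     generate G (B \<union> N) = carrier G \<and>
     (B \<inter> N) \<lhd> (G\<lparr>carrier := N\<rparr>) \<and>
     (\<exists>R. R \<subseteq> N \<and> generate G (R \<union> (B \<inter> N)) = N \<and>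
        (\<forall>r\<in>R. r \<notin> B \<inter> N \<and> r \<otimes>\<^bsub>G\<^esub> r \<in> B \<inter> N \<and>
           r <#\<^bsub>G\<^esub> B #>\<^bsub>G\<^esub> inv\<^bsub>G\<^esub> r \<noteq> B \<and>
           (\<forall>n\<in>N. r <#\<^bsub>G\<^esub> (B #>\<^bsub>G\<^esub> n) \<subseteq>
                (B #>\<^bsub>G\<^esub> n <#>\<^bsub>G\<^esub> B) \<union>
                (B #>\<^bsub>G\<^esub> (r \<otimes>\<^bsub>G\<^esub> n) <#>\<^bsub>G\<^esub> B))))"

definition split_BN_pair :: "('a, 'b) monoid_scheme \<Rightarrow> 'a set \<Rightarrow> 'a set \<Rightarrow> 'a set \<Rightarrow> bool" where
  "split_BN_pair G H U N \<longleftrightarrow>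
     BN_pair G (H <#>\<^bsub>G\<^esub> U) N \<and>
     subgroup H G \<and> subgroup U G \<and>
     U \<lhd> (G\<lparr>carrier := H <#>\<^bsub>G\<^esub> U\<rparr>) \<and>
     H \<inter> U = {\<one>\<^bsub>G\<^esub>} \<and>
     H = (H <#>\<^bsub>G\<^esub> U) \<inter> N \<and>
     (\<Inter>n\<in>N. n <#\<^bsub>G\<^esub> (H <#>\<^bsub>G\<^esub> U) #>\<^bsub>G\<^esub> inv\<^bsub>G\<^esub> n) = H"

end

theory Submission
  imports Defs
begin

text \<open>Write B = HU and U- = n1^-1 U n1. Since W has order two, the Bruhat decomposition reads
  G = B \<union> U n1 H U. Moreover U- \<inter> B = 1, since an element of U- \<inter> B lies in every
  N-conjugate of B, and these intersect in H. So the nontrivial elements of U- lie in the big cell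
  U n1 H U, whence U (U-)* U \<subseteq> U n1 H U, with equality iff (U-)* meets every double coset
  U n1 h U. If equality holds, the big cell lies in U U- U, and an element g of B is
  (g v0^-1) v0 for any v0 in (U-)*, where g v0^-1 lies outside B; hence G = U U- U U-.
  Conversely, write n1 h = u1 v1 u2 v2; since n1 h U- = U n1 h, the element v2 can be moved to
  the left of n1 h, which puts v1 into U n1 h U, and v1 \<noteq> 1 because n1 \<notin> B.\<close>

context group
begin

lemma inv_mult_cancel_left [simp]:
  "x \<in> carrier G \<Longrightarrow> y \<in> carrier G \<Longrightarrow> inv x \<otimes> (x \<otimes> y) = y"
  by (simp add: m_assoc [symmetric])

lemma mult_inv_cancel_left [simp]:
  "x \<in> carrier G \<Longrightarrow> y \<in> carrier G \<Longrightarrow> x \<otimes> (inv x \<otimes> y) = y"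
  by (simp add: m_assoc [symmetric])

lemma in_set_mult_iff: "x \<in> A <#> C \<longleftrightarrow> (\<exists>a\<in>A. \<exists>c\<in>C. x = a \<otimes> c)"
  by (auto simp: set_mult_def)

lemma in_r_coset_iff: "x \<in> A #> g \<longleftrightarrow> (\<exists>a\<in>A. x = a \<otimes> g)"
  by (auto simp: r_coset_def)

lemma in_l_coset_iff: "x \<in> g <# A \<longleftrightarrow> (\<exists>a\<in>A. x = g \<otimes> a)"
  by (auto simp: l_coset_def)

lemma in_double_coset_iff: "x \<in> A #> g <#> C \<longleftrightarrow> (\<exists>a\<in>A. \<exists>c\<in>C. x = a \<otimes> g \<otimes> c)"
  by (auto simp: set_mult_def r_coset_def)

lemma in_set_mult3_iff: "x \<in> A <#> Y <#> C \<longleftrightarrow> (\<exists>a\<in>A. \<exists>y\<in>Y. \<exists>c\<in>C. x = a \<otimes> y \<otimes> c)"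
  by (auto simp: set_mult_def)

lemma in_set_mult4_iff:
  "x \<in> A <#> Y <#> C <#> Z \<longleftrightarrow> (\<exists>a\<in>A. \<exists>y\<in>Y. \<exists>c\<in>C. \<exists>z\<in>Z. x = a \<otimes> y \<otimes> c \<otimes> z)"
  by (auto simp: set_mult_def)

lemma generate_left_mult_closed:
  assumes "A \<subseteq> carrier G" and "S \<subseteq> carrier G"
    and "\<And>a s. a \<in> A \<Longrightarrow> s \<in> S \<Longrightarrow> a \<otimes> s \<in> S"
    and "\<And>a s. a \<in> A \<Longrightarrow> s \<in> S \<Longrightarrow> inv a \<otimes> s \<in> S"
    and "g \<in> generate G A" and "s \<in> S"
  shows "g \<otimes> s \<in> S"
proof -
  from \<open>g \<in> generate G A\<close> have "\<forall>s\<in>S. g \<otimes> s \<in> S"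
  proof induction
    case one
    show ?case using \<open>S \<subseteq> carrier G\<close> by auto
  next
    case (eng h1 h2)
    have "h1 \<in> carrier G" "h2 \<in> carrier G"
      using eng.hyps generate_in_carrier[OF \<open>A \<subseteq> carrier G\<close>] by auto
    then show ?case using eng.IH \<open>S \<subseteq> carrier G\<close> by (auto simp: m_assoc)
  qed (use assms(3,4) in auto)
  with \<open>s \<in> S\<close> show ?thesis by blast
qed

lemma BN_pair_rank_one_n1_B_n1:
  assumes BN: "BN_pair G B N" and "n1 \<in> N" and "n1 \<notin> B"
    and N_rank_one: "N \<subseteq> (B \<inter> N) \<union> (n1 <# (B \<inter> N))"
    and "b \<in> B"
  shows "n1 \<otimes> b \<otimes> n1 \<in> B \<union> (B #> n1 <#> B)"
proof -
  have sB: "subgroup B G" and sN: "subgroup N G" and sBN: "subgroup (B \<inter> N) G"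
    using BN subgroups_Inter_pair by (auto simp: BN_pair_def)
  obtain R where "R \<subseteq> N" and gen_N: "generate G (R \<union> (B \<inter> N)) = N"
    and R_ax: "\<forall>r\<in>R. r \<notin> B \<inter> N \<and> r \<otimes> r \<in> B \<inter> N \<and>
       (\<forall>n\<in>N. r <# (B #> n) \<subseteq> (B #> n <#> B) \<union> (B #> (r \<otimes> n) <#> B))"
    using BN unfolding BN_pair_def by blast
  have "R \<noteq> {}"
  proof
    assume "R = {}"
    then have "N \<subseteq> B \<inter> N" using gen_N generate_subgroup_incl[OF subset_refl sBN] by simp
    with \<open>n1 \<in> N\<close> \<open>n1 \<notin> B\<close> show False by blast
  qed
  then obtain r where "r \<in> R" by blast
  with R_ax \<open>R \<subseteq> N\<close> N_rank_one have "r \<in> n1 <# (B \<inter> N)" by blast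
  then obtain h0 where h0: "h0 \<in> B \<inter> N" "r = n1 \<otimes> h0" by (auto simp: in_l_coset_iff)
  have c: "n1 \<in> carrier G" "h0 \<in> carrier G" "b \<in> carrier G"
    using h0 \<open>n1 \<in> N\<close> \<open>b \<in> B\<close> subgroup.mem_carrier[OF sN] subgroup.mem_carrier[OF sB] by auto
  have "r \<otimes> n1 = (r \<otimes> r) \<otimes> inv h0" using h0 c by (simp add: m_assoc)
  then have rn1_B: "r \<otimes> n1 \<in> B"
    using R_ax \<open>r \<in> R\<close> h0 sB by (auto intro: subgroup.m_closed subgroup.m_inv_closed)
  have "n1 \<otimes> b \<otimes> n1 = r \<otimes> ((inv h0 \<otimes> b) \<otimes> n1)" using h0 c by (simp add: m_assoc)
  moreover have "inv h0 \<otimes> b \<otimes> n1 \<in> B #> n1"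
    using h0 \<open>b \<in> B\<close> sB by (auto simp: in_r_coset_iff intro: subgroup.m_closed subgroup.m_inv_closed)
  ultimately have "n1 \<otimes> b \<otimes> n1 \<in> r <# (B #> n1)" unfolding in_l_coset_iff by blast
  then have "n1 \<otimes> b \<otimes> n1 \<in> (B #> n1 <#> B) \<union> (B #> (r \<otimes> n1) <#> B)"
    using R_ax \<open>r \<in> R\<close> \<open>n1 \<in> N\<close> by blast
  moreover have "B #> (r \<otimes> n1) <#> B \<subseteq> B"
    using rn1_B by (auto simp: in_double_coset_iff intro!: subgroup.m_closed[OF sB])
  ultimately show ?thesis by blast
qed

lemma BN_pair_rank_one_Bruhat:
  assumes BN: "BN_pair G B N" and "n1 \<in> N" and "n1 \<notin> B"
    and N_rank_one: "N \<subseteq> (B \<inter> N) \<union> (n1 <# (B \<inter> N))"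
  shows "carrier G = B \<union> (B #> n1 <#> B)"
proof -
  have sB: "subgroup B G" and sN: "subgroup N G" and gen: "generate G (B \<union> N) = carrier G"
    using BN by (auto simp: BN_pair_def)
  interpret B: subgroup B G by (rule sB)
  interpret N: subgroup N G by (rule sN)
  \<comment> \<open>\<open>S\<close> is stable under left multiplication by the generators \<open>B \<union> N\<close> of \<open>G\<close>.\<close>
  define S where "S = B \<union> (B #> n1 <#> B)"
  have n1_carrier: "n1 \<in> carrier G" using \<open>n1 \<in> N\<close> by (rule N.mem_carrier)
  have S_carrier: "S \<subseteq> carrier G"
    using n1_carrier by (auto simp: S_def in_double_coset_iff)
  have B_S_B: "b \<otimes> s \<in> S \<and> s \<otimes> b \<in> S" if "b \<in> B" "s \<in> S" for b s
  proof -
    consider "s \<in> B" | b1 b2 where "b1 \<in> B" "b2 \<in> B" "s = b1 \<otimes> n1 \<otimes> b2"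
      using \<open>s \<in> S\<close> by (auto simp: S_def in_double_coset_iff)
    then show ?thesis
    proof cases
      case (2 b1 b2)
      have "b \<otimes> s = (b \<otimes> b1) \<otimes> n1 \<otimes> b2" "s \<otimes> b = b1 \<otimes> n1 \<otimes> (b2 \<otimes> b)"
        using 2 \<open>b \<in> B\<close> n1_carrier by (simp_all add: m_assoc)
      then have "b \<otimes> s \<in> B #> n1 <#> B" "s \<otimes> b \<in> B #> n1 <#> B"
        unfolding in_double_coset_iff using 2 \<open>b \<in> B\<close> by blast+
      then show ?thesis by (simp add: S_def)
    qed (use \<open>b \<in> B\<close> in \<open>simp add: S_def\<close>)
  qed
  then have B_S: "b \<otimes> s \<in> S" and S_B: "s \<otimes> b \<in> S" if "b \<in> B" "s \<in> S" for b s
    using that by blast+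
  have n1_S: "n1 \<otimes> s \<in> S" if "s \<in> S" for s
  proof (cases "s \<in> B")
    case True
    then have "n1 \<otimes> s = \<one> \<otimes> n1 \<otimes> s" using n1_carrier by simp
    with True show ?thesis by (auto simp: S_def in_double_coset_iff)
  next
    case False
    with that obtain b1 b2 where "b1 \<in> B" "b2 \<in> B" and s: "s = b1 \<otimes> n1 \<otimes> b2"
      by (auto simp: S_def in_double_coset_iff)
    then have "n1 \<otimes> s = (n1 \<otimes> b1 \<otimes> n1) \<otimes> b2" using n1_carrier by (simp add: m_assoc)
    moreover have "n1 \<otimes> b1 \<otimes> n1 \<in> S"
      unfolding S_def by (rule BN_pair_rank_one_n1_B_n1) fact+
    ultimately show ?thesis using S_B \<open>b2 \<in> B\<close> by simp
  qed
  have gen_S: "x \<otimes> s \<in> S" if "x \<in> B \<union> N" "s \<in> S" for x s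
  proof (cases "x \<in> B")
    case False
    with that N_rank_one have "x \<in> n1 <# (B \<inter> N)" by blast
    then obtain h where "h \<in> B" and x: "x = n1 \<otimes> h" by (auto simp: in_l_coset_iff)
    moreover have "s \<in> carrier G" using \<open>s \<in> S\<close> S_carrier by blast
    ultimately have "x \<otimes> s = n1 \<otimes> (h \<otimes> s)" using n1_carrier by (simp add: m_assoc)
    then show ?thesis using n1_S B_S \<open>h \<in> B\<close> \<open>s \<in> S\<close> by simp
  qed (use B_S that in auto)
  have "g \<in> S" if "g \<in> carrier G" for g
  proof -
    have "\<one> \<in> S" by (simp add: S_def)
    moreover have "g \<in> generate G (B \<union> N)" using gen that by simp
    moreover have "B \<union> N \<subseteq> carrier G" by auto
    moreover have "inv x \<in> B \<union> N" if "x \<in> B \<union> N" for x using that by auto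
    ultimately have "g \<otimes> \<one> \<in> S"
      using generate_left_mult_closed[of "B \<union> N" S] gen_S S_carrier by blast
    then show ?thesis using that by simp
  qed
  with S_carrier show ?thesis unfolding S_def by blast
qed

end

lemma split_BN_pair_imp_group: "split_BN_pair G H U N \<Longrightarrow> group G"
  by (simp add: split_BN_pair_def BN_pair_def)

locale rank_one_split_BN_pair = group +
  fixes H U N :: "'a set" and n1 :: 'a
  assumes split: "split_BN_pair G H U N"
    and n1_in_N: "n1 \<in> N" and n1_notin_H: "n1 \<notin> H"
    and Weyl_group_rank_one: "{n <# H | n. n \<in> N} = {H, n1 <# H}"
begin

abbreviation B where "B \<equiv> H <#> U"

abbreviation U_minus where "U_minus \<equiv> inv n1 <# U #> n1"

lemma BN_pair: "BN_pair G B N"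
  and H_eq_B_Int_N: "H = B \<inter> N"
  and H_Int_U: "H \<inter> U = {\<one>}"
  and U_normal_B: "U \<lhd> G\<lparr>carrier := B\<rparr>"
  and Inter_conjugates_B: "(\<Inter>n\<in>N. n <# B #> inv n) = H"
  using split by (simp_all add: split_BN_pair_def)

sublocale H: subgroup H G using split by (simp add: split_BN_pair_def)
sublocale U: subgroup U G using split by (simp add: split_BN_pair_def)
sublocale N: subgroup N G using BN_pair by (simp add: BN_pair_def)
sublocale B: subgroup B G using BN_pair by (simp add: BN_pair_def)

lemma n1_carrier [simp]: "n1 \<in> carrier G"
  using n1_in_N by (rule N.mem_carrier)

lemma n1_notin_B: "n1 \<notin> B"
  using n1_in_N n1_notin_H H_eq_B_Int_N by blast

lemma H_subset_B: "H \<subseteq> B"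
  and U_subset_B: "U \<subseteq> B"
proof -
  show "H \<subseteq> B"
  proof
    fix h assume "h \<in> H"
    then have "h = h \<otimes> \<one>" by simp
    with \<open>h \<in> H\<close> show "h \<in> B" unfolding in_set_mult_iff using U.one_closed by blast
  qed
  show "U \<subseteq> B"
  proof
    fix u assume "u \<in> U"
    then have "u = \<one> \<otimes> u" by simp
    with \<open>u \<in> U\<close> show "u \<in> B" unfolding in_set_mult_iff using H.one_closed by blast
  qed
qed

lemma H_normalizes_U: "h \<in> H \<Longrightarrow> u \<in> U \<Longrightarrow> h \<otimes> u \<otimes> inv h \<in> U"
  using normal.inv_op_closed2[OF U_normal_B, of h u] H_subset_B
    m_inv_consistent[OF B.subgroup_axioms]
  by auto

lemma N_normalizes_H: "n \<in> N \<Longrightarrow> h \<in> H \<Longrightarrow> n \<otimes> h \<otimes> inv n \<in> H"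
  using BN_pair normal.inv_op_closed2[of "B \<inter> N" "G\<lparr>carrier := N\<rparr>" n h]
    m_inv_consistent[OF N.subgroup_axioms]
  by (auto simp: BN_pair_def simp flip: H_eq_B_Int_N)

lemma N_subset: "N \<subseteq> H \<union> (n1 <# H)"
proof
  fix n assume "n \<in> N"
  then have "n <# H = H \<or> n <# H = n1 <# H" using Weyl_group_rank_one by blast
  moreover have "n \<in> n <# H"
    using \<open>n \<in> N\<close> by (metis H.one_closed N.mem_carrier in_l_coset_iff r_one)
  ultimately show "n \<in> H \<union> (n1 <# H)" by auto
qed

lemma n1_square_in_H: "n1 \<otimes> n1 \<in> H"
proof (rule ccontr)
  assume "n1 \<otimes> n1 \<notin> H"
  then obtain k where "k \<in> H" "n1 \<otimes> n1 = n1 \<otimes> k"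
    using N_subset n1_in_N by (auto simp: in_l_coset_iff)
  then show False using n1_notin_H by simp
qed

abbreviation big_cell where "big_cell \<equiv> U #> n1 <#> H <#> U"

lemma in_big_cell_iff: "x \<in> big_cell \<longleftrightarrow> (\<exists>a\<in>U. \<exists>k\<in>H. \<exists>b\<in>U. x = a \<otimes> n1 \<otimes> k \<otimes> b)"
  by (auto simp: set_mult_def r_coset_def)

lemma in_U_minus_iff: "x \<in> U_minus \<longleftrightarrow> (\<exists>u\<in>U. x = inv n1 \<otimes> u \<otimes> n1)"
  by (auto simp: l_coset_def r_coset_def)

lemma inv_n1_conj_H: "k \<in> H \<Longrightarrow> inv n1 \<otimes> k \<otimes> n1 \<in> H"
  using N_normalizes_H[of "inv n1" k] n1_in_N by simp

lemma double_coset_B_subset_big_cell: "B #> n1 <#> B \<subseteq> big_cell"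
proof
  fix g assume "g \<in> B #> n1 <#> B"
  then obtain b1 b2 where "b1 \<in> B" "b2 \<in> B" "g = b1 \<otimes> n1 \<otimes> b2"
    by (auto simp: in_double_coset_iff)
  then obtain k1 u1 k2 u2 where k: "k1 \<in> H" "k2 \<in> H" and u: "u1 \<in> U" "u2 \<in> U"
    and g: "g = (k1 \<otimes> u1) \<otimes> n1 \<otimes> (k2 \<otimes> u2)"
    unfolding in_set_mult_iff by blast
  then have "g = (k1 \<otimes> u1 \<otimes> inv k1) \<otimes> n1 \<otimes> ((inv n1 \<otimes> k1 \<otimes> n1) \<otimes> k2) \<otimes> u2"
    by (simp add: m_assoc)
  moreover have "k1 \<otimes> u1 \<otimes> inv k1 \<in> U" using k u by (simp add: H_normalizes_U)
  moreover have "(inv n1 \<otimes> k1 \<otimes> n1) \<otimes> k2 \<in> H" using k inv_n1_conj_H by simp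
  ultimately show "g \<in> big_cell" unfolding in_big_cell_iff using u by blast
qed

lemma Bruhat_decomposition: "carrier G = B \<union> big_cell"
proof
  have "N \<subseteq> (B \<inter> N) \<union> (n1 <# (B \<inter> N))"
    using N_subset H_eq_B_Int_N by simp
  then have "carrier G = B \<union> (B #> n1 <#> B)"
    using BN_pair_rank_one_Bruhat BN_pair n1_in_N n1_notin_B by blast
  then show "carrier G \<subseteq> B \<union> big_cell" using double_coset_B_subset_big_cell by blast
  show "B \<union> big_cell \<subseteq> carrier G" by (auto simp: in_big_cell_iff)
qed

lemma U_minus_conjugate_in_B:
  assumes "v \<in> U_minus" "v \<in> B" "n \<in> N"
  shows "inv n \<otimes> v \<otimes> n \<in> B"
proof -
  have "n \<in> H \<union> (n1 <# H)" using N_subset \<open>n \<in> N\<close> by blast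
  then consider "n \<in> H" | k where "k \<in> H" "n = n1 \<otimes> k"
    by (auto simp: in_l_coset_iff)
  then show ?thesis
  proof cases
    case 1
    then have "n \<in> B" using H_subset_B by blast
    then show ?thesis using \<open>v \<in> B\<close> by (intro B.m_closed B.m_inv_closed)
  next
    case (2 k)
    obtain u where u: "u \<in> U" "v = inv n1 \<otimes> u \<otimes> n1"
      using \<open>v \<in> U_minus\<close> unfolding in_U_minus_iff by blast
    define c where "c = n1 \<otimes> n1 \<otimes> k"
    have c: "c \<in> H" using n1_square_in_H 2 by (simp add: c_def H.m_closed)
    have "inv n \<otimes> v \<otimes> n = inv c \<otimes> u \<otimes> c"
      using 2 u by (simp add: c_def inv_mult_group m_assoc)
    also have "\<dots> \<in> U" using H_normalizes_U[of "inv c" u] c u by simp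
    finally show ?thesis using U_subset_B by blast
  qed
qed

lemma U_minus_Int_B: "U_minus \<inter> B = {\<one>}"
proof (intro equalityI subsetI)
  fix v assume "v \<in> U_minus \<inter> B"
  then have v: "v \<in> U_minus" "v \<in> B" by auto
  then obtain u where u: "u \<in> U" "v = inv n1 \<otimes> u \<otimes> n1" unfolding in_U_minus_iff by blast
  have "v \<in> n <# B #> inv n" if "n \<in> N" for n
  proof -
    have "v = n \<otimes> (inv n \<otimes> v \<otimes> n) \<otimes> inv n" using u that by (simp add: m_assoc)
    moreover have "n \<otimes> (inv n \<otimes> v \<otimes> n) \<in> n <# B"
      using U_minus_conjugate_in_B[OF v that] unfolding in_l_coset_iff by blast
    ultimately show "v \<in> n <# B #> inv n" unfolding in_r_coset_iff by blast
  qed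
  then have "v \<in> H" using Inter_conjugates_B by blast
  then have "n1 \<otimes> v \<otimes> inv n1 \<in> H" using N_normalizes_H n1_in_N by simp
  moreover have "n1 \<otimes> v \<otimes> inv n1 = u" using u by (simp add: m_assoc)
  ultimately have "u = \<one>" using H_Int_U u by blast
  then show "v \<in> {\<one>}" using u by simp
next
  fix v assume "v \<in> {\<one>}"
  have "\<one> = inv n1 \<otimes> \<one> \<otimes> n1" by simp
  then have "\<one> \<in> U_minus" unfolding in_U_minus_iff using U.one_closed by blast
  with \<open>v \<in> {\<one>}\<close> show "v \<in> U_minus \<inter> B" by simp
qed

lemma U_minus_carrier: "U_minus \<subseteq> carrier G"
  by (auto simp: in_U_minus_iff)

lemma U_minus_nontrivial_subset_big_cell: "U_minus - {\<one>} \<subseteq> big_cell"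
proof
  fix v assume v: "v \<in> U_minus - {\<one>}"
  then have "v \<notin> B" using U_minus_Int_B by blast
  moreover have "v \<in> carrier G" using v U_minus_carrier by blast
  ultimately show "v \<in> big_cell" using Bruhat_decomposition by blast
qed

lemma U_U_minus_U_subset_big_cell: "U <#> (U_minus - {\<one>}) <#> U \<subseteq> big_cell"
proof
  fix x assume "x \<in> U <#> (U_minus - {\<one>}) <#> U"
  then obtain a v b where "a \<in> U" "b \<in> U" "v \<in> U_minus - {\<one>}" and x: "x = a \<otimes> v \<otimes> b"
    unfolding in_set_mult3_iff by blast
  then have "v \<in> big_cell" using U_minus_nontrivial_subset_big_cell by blast
  then obtain a' k b' where "a' \<in> U" "k \<in> H" "b' \<in> U" and v: "v = a' \<otimes> n1 \<otimes> k \<otimes> b'"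
    unfolding in_big_cell_iff by blast
  have "x = (a \<otimes> a') \<otimes> n1 \<otimes> k \<otimes> (b' \<otimes> b)"
    using x v \<open>a \<in> U\<close> \<open>b \<in> U\<close> \<open>a' \<in> U\<close> \<open>b' \<in> U\<close> \<open>k \<in> H\<close> by (simp add: m_assoc)
  then show "x \<in> big_cell"
    unfolding in_big_cell_iff using \<open>a \<in> U\<close> \<open>b \<in> U\<close> \<open>a' \<in> U\<close> \<open>b' \<in> U\<close> \<open>k \<in> H\<close> by blast
qed

lemma U_minus_meets_double_cosets_iff:
  "(\<forall>h\<in>H. (U_minus - {\<one>}) \<inter> (U #> (n1 \<otimes> h) <#> U) \<noteq> {})
     \<longleftrightarrow> U <#> (U_minus - {\<one>}) <#> U = big_cell"
proof
  assume meets: "\<forall>h\<in>H. (U_minus - {\<one>}) \<inter> (U #> (n1 \<otimes> h) <#> U) \<noteq> {}"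
  have "big_cell \<subseteq> U <#> (U_minus - {\<one>}) <#> U"
  proof
    fix x assume "x \<in> big_cell"
    then obtain a k b where "a \<in> U" "k \<in> H" "b \<in> U" and x: "x = a \<otimes> n1 \<otimes> k \<otimes> b"
      unfolding in_big_cell_iff by blast
    obtain v where v: "v \<in> U_minus - {\<one>}" and "v \<in> U #> (n1 \<otimes> k) <#> U"
      using meets \<open>k \<in> H\<close> by blast
    then obtain a' b' where "a' \<in> U" "b' \<in> U" and v_eq: "v = a' \<otimes> (n1 \<otimes> k) \<otimes> b'"
      unfolding in_double_coset_iff by blast
    have "x = (a \<otimes> inv a') \<otimes> v \<otimes> (inv b' \<otimes> b)"
      using x v_eq \<open>a \<in> U\<close> \<open>b \<in> U\<close> \<open>a' \<in> U\<close> \<open>b' \<in> U\<close> \<open>k \<in> H\<close> by (simp add: m_assoc)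
    moreover have "a \<otimes> inv a' \<in> U" "inv b' \<otimes> b \<in> U"
      using \<open>a \<in> U\<close> \<open>b \<in> U\<close> \<open>a' \<in> U\<close> \<open>b' \<in> U\<close> by (simp_all add: U.m_closed)
    ultimately show "x \<in> U <#> (U_minus - {\<one>}) <#> U"
      unfolding in_set_mult3_iff using v by blast
  qed
  with U_U_minus_U_subset_big_cell show "U <#> (U_minus - {\<one>}) <#> U = big_cell" by blast
next
  assume eq: "U <#> (U_minus - {\<one>}) <#> U = big_cell"
  show "\<forall>h\<in>H. (U_minus - {\<one>}) \<inter> (U #> (n1 \<otimes> h) <#> U) \<noteq> {}"
  proof
    fix h assume "h \<in> H"
    then have "n1 \<otimes> h = \<one> \<otimes> n1 \<otimes> h \<otimes> \<one>" by simp
    then have "n1 \<otimes> h \<in> big_cell" unfolding in_big_cell_iff using \<open>h \<in> H\<close> U.one_closed by blast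
    then obtain a v b where "a \<in> U" "b \<in> U" "v \<in> U_minus - {\<one>}" and x: "n1 \<otimes> h = a \<otimes> v \<otimes> b"
      unfolding eq [symmetric] in_set_mult3_iff by blast
    moreover have "v \<in> carrier G" using \<open>v \<in> U_minus - {\<one>}\<close> U_minus_carrier by blast
    ultimately have "v = inv a \<otimes> (n1 \<otimes> h) \<otimes> inv b" by (simp add: m_assoc)
    then have "v \<in> U #> (n1 \<otimes> h) <#> U"
      unfolding in_double_coset_iff using \<open>a \<in> U\<close> \<open>b \<in> U\<close> U.m_inv_closed by blast
    with \<open>v \<in> U_minus - {\<one>}\<close> show "(U_minus - {\<one>}) \<inter> (U #> (n1 \<otimes> h) <#> U) \<noteq> {}" by blast
  qed
qed

lemma carrier_eq_U_U_minus_square: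
  assumes eq: "U <#> (U_minus - {\<one>}) <#> U = big_cell"
  shows "carrier G = U <#> U_minus <#> U <#> U_minus"
proof
  show "U <#> U_minus <#> U <#> U_minus \<subseteq> carrier G"
    using U_minus_carrier unfolding subset_iff in_set_mult4_iff by auto
  have one: "\<one> \<in> U_minus" using U_minus_Int_B by blast
  have big_cell_mult: "x \<otimes> w \<in> U <#> U_minus <#> U <#> U_minus" if "x \<in> big_cell" "w \<in> U_minus" for x w
  proof -
    from that obtain a v b where "a \<in> U" "v \<in> U_minus - {\<one>}" "b \<in> U" and "x = a \<otimes> v \<otimes> b"
      unfolding eq [symmetric] in_set_mult3_iff by blast
    with that show ?thesis unfolding in_set_mult4_iff by blast
  qed
  have "n1 = \<one> \<otimes> n1 \<otimes> \<one> \<otimes> \<one>" by simp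
  then have "n1 \<in> big_cell" unfolding in_big_cell_iff using U.one_closed H.one_closed by blast
  then obtain v0 where v0: "v0 \<in> U_minus - {\<one>}"
    unfolding eq [symmetric] in_set_mult3_iff by blast
  then have v0_carrier: "v0 \<in> carrier G" and v0_notin_B: "v0 \<notin> B"
    using U_minus_carrier U_minus_Int_B by blast+
  show "carrier G \<subseteq> U <#> U_minus <#> U <#> U_minus"
  proof
    fix g assume g: "g \<in> carrier G"
    show "g \<in> U <#> U_minus <#> U <#> U_minus"
    proof (cases "g \<in> B")
      case False
      then have "g \<otimes> \<one> \<in> big_cell" using g Bruhat_decomposition by simp
      then show ?thesis using big_cell_mult one g by (metis r_one)
    next
      case True
      have "g \<otimes> inv v0 \<notin> B"
      proof
        assume "g \<otimes> inv v0 \<in> B"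
        then have "inv (g \<otimes> inv v0) \<otimes> g \<in> B" using True by (rule B.m_closed [OF B.m_inv_closed])
        moreover have "inv (g \<otimes> inv v0) \<otimes> g = v0" using g v0_carrier by (simp add: inv_mult_group m_assoc)
        ultimately show False using v0_notin_B by simp
      qed
      moreover have "g \<otimes> inv v0 \<in> carrier G" using g v0_carrier by simp
      ultimately have "g \<otimes> inv v0 \<in> big_cell" using Bruhat_decomposition by blast
      then have "g \<otimes> inv v0 \<otimes> v0 \<in> U <#> U_minus <#> U <#> U_minus"
        using big_cell_mult v0 by blast
      then show ?thesis using g v0_carrier by (simp add: m_assoc)
    qed
  qed
qed

lemma U_minus_inv_closed: "v \<in> U_minus \<Longrightarrow> inv v \<in> U_minus"
proof -
  assume "v \<in> U_minus"
  then obtain u where "u \<in> U" "v = inv n1 \<otimes> u \<otimes> n1" unfolding in_U_minus_iff by blast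
  then have "inv v = inv n1 \<otimes> inv u \<otimes> n1" by (simp add: inv_mult_group m_assoc)
  with \<open>u \<in> U\<close> show "inv v \<in> U_minus" unfolding in_U_minus_iff by blast
qed

lemma n1_H_mult_U_minus:
  assumes "h \<in> H" "v \<in> U_minus"
  shows "\<exists>w\<in>U. n1 \<otimes> h \<otimes> v = w \<otimes> (n1 \<otimes> h)"
proof -
  obtain u where u: "u \<in> U" "v = inv n1 \<otimes> u \<otimes> n1"
    using \<open>v \<in> U_minus\<close> unfolding in_U_minus_iff by blast
  define t where "t = n1 \<otimes> h \<otimes> inv n1"
  have t: "t \<in> H" unfolding t_def using N_normalizes_H n1_in_N \<open>h \<in> H\<close> by blast
  have "n1 \<otimes> h \<otimes> v = (t \<otimes> u \<otimes> inv t) \<otimes> (n1 \<otimes> h)"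
    using u \<open>h \<in> H\<close> by (simp add: t_def inv_mult_group m_assoc)
  moreover have "t \<otimes> u \<otimes> inv t \<in> U" using t u by (simp add: H_normalizes_U)
  ultimately show ?thesis by blast
qed

lemma one_notin_double_coset: "h \<in> H \<Longrightarrow> \<one> \<notin> U #> (n1 \<otimes> h) <#> U"
proof
  assume "h \<in> H" "\<one> \<in> U #> (n1 \<otimes> h) <#> U"
  then obtain a b where "a \<in> U" "b \<in> U" and one: "\<one> = a \<otimes> (n1 \<otimes> h) \<otimes> b"
    unfolding in_double_coset_iff by blast
  have "n1 = inv a \<otimes> (a \<otimes> (n1 \<otimes> h) \<otimes> b) \<otimes> inv b \<otimes> inv h"
    using \<open>a \<in> U\<close> \<open>b \<in> U\<close> \<open>h \<in> H\<close> by (simp add: m_assoc)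
  also have "\<dots> = inv a \<otimes> inv b \<otimes> inv h"
    using \<open>a \<in> U\<close> \<open>b \<in> U\<close> \<open>h \<in> H\<close> by (simp flip: one)
  also have "\<dots> \<in> B"
    using \<open>a \<in> U\<close> \<open>b \<in> U\<close> \<open>h \<in> H\<close> U_subset_B H_subset_B
    by (intro B.m_closed B.m_inv_closed) auto
  finally show False using n1_notin_B by contradiction
qed

lemma U_minus_meets_double_coset_of_carrier_eq:
  assumes eq: "carrier G = U <#> U_minus <#> U <#> U_minus" and "h \<in> H"
  shows "(U_minus - {\<one>}) \<inter> (U #> (n1 \<otimes> h) <#> U) \<noteq> {}"
proof -
  have "n1 \<otimes> h \<in> carrier G" using \<open>h \<in> H\<close> by simp
  then obtain u1 v1 u2 v2 where u: "u1 \<in> U" "u2 \<in> U" and v: "v1 \<in> U_minus" "v2 \<in> U_minus"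
    and nh: "n1 \<otimes> h = u1 \<otimes> v1 \<otimes> u2 \<otimes> v2"
    unfolding eq in_set_mult4_iff by blast
  obtain w where w: "w \<in> U" "n1 \<otimes> h \<otimes> inv v2 = w \<otimes> (n1 \<otimes> h)"
    using n1_H_mult_U_minus[OF \<open>h \<in> H\<close> U_minus_inv_closed[OF \<open>v2 \<in> U_minus\<close>]] by blast
  have v_carrier: "v1 \<in> carrier G" "v2 \<in> carrier G" using v U_minus_carrier by auto
  have "w \<otimes> (n1 \<otimes> h) = n1 \<otimes> h \<otimes> inv v2" using w(2) by simp
  also have "\<dots> = u1 \<otimes> v1 \<otimes> u2" using u v_carrier by (simp add: nh m_assoc)
  finally have "v1 = inv u1 \<otimes> (w \<otimes> (n1 \<otimes> h)) \<otimes> inv u2"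
    using u v_carrier by (simp add: m_assoc)
  then have "v1 = (inv u1 \<otimes> w) \<otimes> (n1 \<otimes> h) \<otimes> inv u2"
    using u w(1) \<open>h \<in> H\<close> by (simp add: m_assoc)
  moreover have "inv u1 \<otimes> w \<in> U" "inv u2 \<in> U" using u w(1) by (simp_all add: U.m_closed)
  ultimately have "v1 \<in> U #> (n1 \<otimes> h) <#> U" unfolding in_double_coset_iff by blast
  moreover have "v1 \<noteq> \<one>" using calculation one_notin_double_coset \<open>h \<in> H\<close> by blast
  ultimately show ?thesis using v by blast
qed

lemma U_U_minus_U_eq_big_cell_iff:
  "U <#> (U_minus - {\<one>}) <#> U = big_cell \<longleftrightarrow> carrier G = U <#> U_minus <#> U <#> U_minus"
  using carrier_eq_U_U_minus_square U_minus_meets_double_coset_of_carrier_eq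
    U_minus_meets_double_cosets_iff
  by blast

end

theorem lemma5:
  fixes G (structure) and H U N :: "'a set" and n1 :: 'a
  assumes split: "split_BN_pair G H U N"
    and n1N: "n1 \<in> N"
    and n1H: "n1 \<notin> H"
    and W: "{n <# H | n. n \<in> N} = {H, n1 <# H}"
  defines "Um \<equiv> inv n1 <# U #> n1"
  shows "((\<forall>h\<in>H. (Um - {\<one>}) \<inter> (U #> (n1 \<otimes> h) <#> U) \<noteq> {})
           \<longleftrightarrow> U <#> (Um - {\<one>}) <#> U = U #> n1 <#> H <#> U)
       \<and> (U <#> (Um - {\<one>}) <#> U = U #> n1 <#> H <#> U
           \<longleftrightarrow> carrier G = U <#> Um <#> U <#> Um)"
proof -
  interpret rank_one_split_BN_pair G H U N n1
    using split_BN_pair_imp_group [OF split] split n1N n1H W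
    by (simp add: rank_one_split_BN_pair_def rank_one_split_BN_pair_axioms_def)
  show ?thesis
    unfolding Um_def using U_minus_meets_double_cosets_iff U_U_minus_U_eq_big_cell_iff by blast
qed

end
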